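(* Let $n,m,\bar m$ be positive integers with $n\le m$ and $n\le \bar m$. Let $\mathcal F$ and $\bar{\mathcal F}$ be the fields of rational functions in $x_1,\dots,x_m$ and in $\bar x_1,\dots,\bar x_{\bar m}$, respectively. Let $\varphi:\mathbb{Q}_{\mathrm{sf}}(x_1,\dots,x_m)\to \mathrm{Trop}(\bar x_{n+1},\dots,\bar x_{\bar m})$ be a semifield homomorphism (determined by an arbitrary choice of Laurent monomials $\varphi(x_i)$), and let $\psi:\mathbb{Q}_{\mathrm{sf}}(x_1,\dots,x_m)\to\mathbb{Q}_{\mathrm{sf}}(\bar x_1,\dots,\bar x_{\bar m})$ be the semifield homomorphism with $\psi(x_i)=\bar x_i\,\varphi(x_i)$ for $i\le n$ and $\psi(x_i)=\varphi(x_i)$ for $i>n$. Let $(\mathbf{x}(t),\mathbf{y}(t),B(t))_{t\in\mathbb{T}_n}$ be a seed pattern in $\mathcal F$ with frozen variables $x_{n+1},\dots,x_m$, with $\mathbf{x}(t)=(x_{1;t},\dots,x_{n;t})$, $\mathbf{y}(t)=(y_{1;t},\dots,y_{n;t})\in\mathrm{Trop}(x_{n+1},\dots,x_m)^n$, $B(t)=(b^t_{ij})$, and initial cluster $\mathbf{x}(t_\circ)=(x_1,\dots,x_n)$. Define $$\bar x_{i;t}=\frac{\psi(x_{i;t})}{\varphi(x_{i;t})},\qquad \bar y_{k;t}=\varphi(\hat y_{k;t})=\varphi(y_{k;t})\prod_{i=1}^n\varphi(x_{i;t})^{b^t_{ik}},$$ and $\bar{\mathbf x}(t)=(\bar x_{1;t},\dots,\bar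 x_{n;t})$, $\bar{\mathbf y}(t)=(\bar y_{1;t},\dots,\bar y_{n;t})$. Then $(\bar{\mathbf x}(t),\bar{\mathbf y}(t),B(t))_{t\in\mathbb{T}_n}$ is a seed pattern in $\bar{\mathcal F}$, with the same exchange matrices $B(t)$ and with frozen variables $\bar x_{n+1},\dots,\bar x_{\bar m}$.
   Context: $\mathbb{Q}_{\mathrm{sf}}(u_1,\dots,u_l)$ denotes the semifield of subtraction-free rational expressions in $u_1,\dots,u_l$ (with ordinary multiplication and addition). $\mathrm{Trop}(u_1,\dots,u_l)$ is the tropical semifield: the multiplicative group of Laurent monomials in $u_1,\dots,u_l$ with addition $\prod u_j^{a_j}\oplus\prod u_j^{b_j}=\prod u_j^{\min(a_j,b_j)}$. A semifield homomorphism preserves multiplication and sends $+$ to the addition of the target. $\mathbb{T}_n$ is the $n$-regular tree whose edges are labeled by $1,\dots,n$ so that the $n$ edges at each vertex have distinct labels. A seed pattern in a field $\mathcal F$ (of rational functions in $m$ variables) with frozen variables $x_{n+1},\dots,x_m$ is an assignment to each $t\in\mathbb{T}_n$ of a triple $(\mathbf{x}(t),\mathbf{y}(t),B(t))$, where $\mathbf{x}(t)=(x_{1;t},\dots,x_{n;t})\in\mathcal F^n$ is such that $x_{1;t},\dots,x_{n;t},x_{n+1},\dots,x_m$ are algebraically independent and generate $\mathcal F$, $\mathbf{y}(t)\in\mathrm{Trop}(x_{n+1},\dots,x_m)^n$, and $B(t)=(b^t_{ij})$ is a skew-symmetrizable integer $n\times n$ matrix, such that for every edge $t\overset{k}{-}t'$: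 $B(t')=\mu_k(B(t))$ (matrix mutation: $b'_{ij}=-b_{ij}$ if $k\in\{i,j\}$, else $b'_{ij}=b_{ij}+\mathrm{sgn}(b_{ik})\max(b_{ik}b_{kj},0)$); $y_{k;t'}=y_{k;t}^{-1}$ and $y_{j;t'}=y_{j;t}\,y_{k;t}^{\max(b^t_{kj},0)}(y_{k;t}\oplus1)^{-b^t_{kj}}$ for $j\ne k$; $x_{i;t'}=x_{i;t}$ for $i\ne k$; and $$x_{k;t}\,x_{k;t'}=\frac{y_{k;t}\prod_{b^t_{ik}>0}x_{i;t}^{b^t_{ik}}+\prod_{b^t_{ik}<0}x_{i;t}^{-b^t_{ik}}}{y_{k;t}\oplus1}$$ (products over $i\in\{1,\dots,n\}$). By these relations every $x_{i;t}$ is a subtraction-free rational expression in $x_1,\dots,x_m$, so $\psi(x_{i;t})$ and $\varphi(x_{i;t})$ are defined. Here $\hat y_{k;t}=y_{k;t}\prod_{i=1}^n x_{i;t}^{b^t_{ik}}$. *)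

theory Defs
  imports Complex_Main "HOL-Library.Poly_Mapping" "HOL-Computational_Algebra.Fraction_Field"
begin

type_synonym mpoly = "(nat \<Rightarrow>\<^sub>0 nat) \<Rightarrow>\<^sub>0 rat"
type_synonym rfun = "mpoly fract"

definition var :: "nat \<Rightarrow> rfun" where
  "var i = Fract (Poly_Mapping.single (Poly_Mapping.single i 1) 1) 1"

definition const_rf :: "rat \<Rightarrow> rfun" where
  "const_rf c = Fract (Poly_Mapping.single 0 c) 1"

definition poly_in :: "nat set \<Rightarrow> mpoly \<Rightarrow> bool" where
  "poly_in I P \<longleftrightarrow> (\<forall>mon \<in> Poly_Mapping.keys P. Poly_Mapping.keys (mon :: nat \<Rightarrow>\<^sub>0 nat) \<subseteq> I)"

definition eval_poly :: "mpoly \<Rightarrow> (nat \<Rightarrow> rfun) \<Rightarrow> rfun" where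
  "eval_poly P g = (\<Sum>mon \<in> Poly_Mapping.keys P. const_rf (Poly_Mapping.lookup P mon) * (\<Prod>i \<in> Poly_Mapping.keys mon. g i ^ Poly_Mapping.lookup mon i))"

definition gen_field :: "nat set \<Rightarrow> (nat \<Rightarrow> rfun) \<Rightarrow> rfun set" where
  "gen_field I g = {eval_poly P g / eval_poly Q g | P Q.
      poly_in I P \<and> poly_in I Q \<and> eval_poly Q g \<noteq> 0}"

definition ratfield :: "nat \<Rightarrow> rfun set" where
  "ratfield m = gen_field {1..m} var"

definition alg_indep :: "nat set \<Rightarrow> (nat \<Rightarrow> rfun) \<Rightarrow> bool" where
  "alg_indep I g \<longleftrightarrow> (\<forall>P. poly_in I P \<longrightarrow> eval_poly P g = 0 \<longrightarrow> P = 0)"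

inductive_set sf :: "nat \<Rightarrow> rfun set" for m :: nat where
  sf_var: "i \<in> {1..m} \<Longrightarrow> var i \<in> sf m"
| sf_add: "f \<in> sf m \<Longrightarrow> g \<in> sf m \<Longrightarrow> f + g \<in> sf m"
| sf_mult: "f \<in> sf m \<Longrightarrow> g \<in> sf m \<Longrightarrow> f * g \<in> sf m"
| sf_div: "f \<in> sf m \<Longrightarrow> g \<in> sf m \<Longrightarrow> f / g \<in> sf m"

section \<open>Tropical semifield Trop(u_{n+1},...,u_M) as exponent vectors\<close>

type_synonym trop = "nat \<Rightarrow> int"

definition trop_set :: "nat \<Rightarrow> nat \<Rightarrow> trop set" where
  "trop_set n M = {e. \<forall>j. j \<notin> {n+1..M} \<longrightarrow> e j = 0}"

definition trop_mult :: "trop \<Rightarrow> trop \<Rightarrow> trop" where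
  "trop_mult e f = (\<lambda>j. e j + f j)"

definition trop_add :: "trop \<Rightarrow> trop \<Rightarrow> trop" where
  "trop_add e f = (\<lambda>j. min (e j) (f j))"

definition laurent_mono :: "nat \<Rightarrow> nat \<Rightarrow> trop \<Rightarrow> rfun" where
  "laurent_mono n M e = (\<Prod>j \<in> {n+1..M}. var j powi e j)"

definition sf_hom_trop :: "nat \<Rightarrow> nat \<Rightarrow> nat \<Rightarrow> (rfun \<Rightarrow> trop) \<Rightarrow> bool" where
  "sf_hom_trop m n M \<phi> \<longleftrightarrow>
     (\<forall>f \<in> sf m. \<phi> f \<in> trop_set n M) \<and>
     (\<forall>f \<in> sf m. \<forall>g \<in> sf m. \<phi> (f * g) = trop_mult (\<phi> f) (\<phi> g)) \<and>
     (\<forall>f \<in> sf m. \<forall>g \<in> sf m. \<phi> (f + g) = trop_add (\<phi> f) (\<phi> g))"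

definition sf_hom :: "nat \<Rightarrow> nat \<Rightarrow> (rfun \<Rightarrow> rfun) \<Rightarrow> bool" where
  "sf_hom m M \<psi> \<longleftrightarrow>
     (\<forall>f \<in> sf m. \<psi> f \<in> sf M) \<and>
     (\<forall>f \<in> sf m. \<forall>g \<in> sf m. \<psi> (f * g) = \<psi> f * \<psi> g) \<and>
     (\<forall>f \<in> sf m. \<forall>g \<in> sf m. \<psi> (f + g) = \<psi> f + \<psi> g)"

text \<open>Vertices: reduced words over {1..n} (no two equal adjacent letters); the empty
  word is the base vertex t_0. The edge labelled k joins t and t @ [k].\<close>
definition tree :: "nat \<Rightarrow> nat list set" where
  "tree n = {ws. set ws \<subseteq> {1..n} \<and> successively (\<noteq>) ws}"

definition tree_edge :: "nat \<Rightarrow> nat list \<Rightarrow> nat \<Rightarrow> nat list \<Rightarrow> bool" where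
  "tree_edge n t k t' \<longleftrightarrow> t \<in> tree n \<and> t' \<in> tree n \<and> k \<in> {1..n} \<and>
     (t' = t @ [k] \<or> t = t' @ [k])"

definition skew_symmetrizable :: "nat \<Rightarrow> (nat \<Rightarrow> nat \<Rightarrow> int) \<Rightarrow> bool" where
  "skew_symmetrizable n B \<longleftrightarrow>
     (\<exists>d :: nat \<Rightarrow> int. (\<forall>i \<in> {1..n}. d i > 0) \<and>
        (\<forall>i \<in> {1..n}. \<forall>j \<in> {1..n}. d i * B i j = - (d j * B j i)))"

definition matrix_mutation_rel ::
  "nat \<Rightarrow> nat \<Rightarrow> (nat \<Rightarrow> nat \<Rightarrow> int) \<Rightarrow> (nat \<Rightarrow> nat \<Rightarrow> int) \<Rightarrow> bool" where
  "matrix_mutation_rel n k B B' \<longleftrightarrow>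
     (\<forall>i \<in> {1..n}. \<forall>j \<in> {1..n}.
        B' i j = (if i = k \<or> j = k then - B i j
                  else B i j + sgn (B i k) * max (B i k * B k j) 0))"

definition y_mutation_rel ::
  "nat \<Rightarrow> nat \<Rightarrow> (nat \<Rightarrow> nat \<Rightarrow> int) \<Rightarrow> (nat \<Rightarrow> trop) \<Rightarrow> (nat \<Rightarrow> trop) \<Rightarrow> bool" where
  "y_mutation_rel n k B y y' \<longleftrightarrow>
     y' k = (\<lambda>l. - y k l) \<and>
     (\<forall>j \<in> {1..n}. j \<noteq> k \<longrightarrow>
        y' j = (\<lambda>l. y j l + max (B k j) 0 * y k l - B k j * min (y k l) 0))"

text \<open>Exchange relation; the frozen variables are var (n+1), ..., var M and
  y-variables are Laurent monomials in them (trop_add e 0 is e \<oplus> 1).\<close>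
definition x_mutation_rel ::
  "nat \<Rightarrow> nat \<Rightarrow> nat \<Rightarrow> (nat \<Rightarrow> nat \<Rightarrow> int) \<Rightarrow> (nat \<Rightarrow> trop)
     \<Rightarrow> (nat \<Rightarrow> rfun) \<Rightarrow> (nat \<Rightarrow> rfun) \<Rightarrow> bool" where
  "x_mutation_rel n M k B y x x' \<longleftrightarrow>
     (\<forall>i \<in> {1..n}. i \<noteq> k \<longrightarrow> x' i = x i) \<and>
     x k * x' k =
       (laurent_mono n M (y k) * (\<Prod>i \<in> {i \<in> {1..n}. B i k > 0}. x i ^ nat (B i k))
          + (\<Prod>i \<in> {i \<in> {1..n}. B i k < 0}. x i ^ nat (- B i k)))
       / laurent_mono n M (trop_add (y k) (\<lambda>_. 0))"

definition seed_pattern ::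
  "nat \<Rightarrow> nat \<Rightarrow> (nat list \<Rightarrow> nat \<Rightarrow> rfun) \<Rightarrow> (nat list \<Rightarrow> nat \<Rightarrow> trop)
     \<Rightarrow> (nat list \<Rightarrow> nat \<Rightarrow> nat \<Rightarrow> int) \<Rightarrow> bool" where
  "seed_pattern n M x y B \<longleftrightarrow>
     (\<forall>t \<in> tree n.
        (\<forall>i \<in> {1..n}. x t i \<in> ratfield M) \<and>
        alg_indep {1..M} (\<lambda>i. if i \<le> n then x t i else var i) \<and>
        gen_field {1..M} (\<lambda>i. if i \<le> n then x t i else var i) = ratfield M \<and>
        (\<forall>k \<in> {1..n}. y t k \<in> trop_set n M) \<and>
        skew_symmetrizable n (B t)) \<and>
     (\<forall>t k t'. tree_edge n t k t' \<longrightarrow>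
        matrix_mutation_rel n k (B t) (B t') \<and>
        y_mutation_rel n k (B t) (y t) (y t') \<and>
        x_mutation_rel n M k (B t) (y t) (x t) (x t'))"

end

theory Submission
  imports Defs
begin

text \<open>
  Write x_bar f = \<psi>(f) / \<phi>(f), reading the tropical value \<phi>(f) as a Laurent monomial in the
  new frozen variables. As \<phi> is a tropical valuation and \<psi> agrees with it on the frozen
  variables, x_bar is multiplicative, kills frozen Laurent monomials, and on a sum gives
  x_bar (f + g) = (d x_bar f + x_bar g) / (d \<oplus> 1) with d = \<phi>(f) / \<phi>(g). Applied to the exchange
  relation x_k x_k' (y_k \<oplus> 1) = y_k \<Prod> x_i^[b_ik]+ + \<Prod> x_i^[-b_ik]+ this is the exchange relation of
  the new pattern, with coefficient d = \<phi>(y_k \<Prod> x_i^b_ik) = y_bar_k. Applying \<phi> itself to the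
  same relation gives a tropical identity which, combined with matrix mutation, is exactly the
  mutation rule of the y_bar. Finally, each new exchange relation reads x_bar_k x_bar_k' = U(x_bar) for a
  nonzero polynomial U not involving X_k; such an exchange preserves algebraic independence and
  the generated field, so induction along the tree, starting from x_bar_i = x_i at the root,
  shows that every extended cluster is a free generating set of the new field.
\<close>

section \<open>Evaluating polynomials\<close>

definition eval_monom :: "(nat \<Rightarrow>\<^sub>0 nat) \<Rightarrow> (nat \<Rightarrow> rfun) \<Rightarrow> rfun" where
  "eval_monom a g = (\<Prod>i \<in> Poly_Mapping.keys a. g i ^ Poly_Mapping.lookup a i)"

lemma eval_monom_superset:
  assumes "finite S" "Poly_Mapping.keys a \<subseteq> S"
  shows "eval_monom a g = (\<Prod>i \<in> S. g i ^ Poly_Mapping.lookup a i)"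
  unfolding eval_monom_def
  by (rule prod.mono_neutral_left) (use assms in \<open>auto simp: in_keys_iff\<close>)

lemma eval_monom_0 [simp]: "eval_monom 0 g = 1"
  by (simp add: eval_monom_def)

lemma eval_monom_add: "eval_monom (a + b) g = eval_monom a g * eval_monom b g"
proof -
  let ?S = "Poly_Mapping.keys a \<union> Poly_Mapping.keys b"
  have "eval_monom (a + b) g = (\<Prod>i \<in> ?S. g i ^ Poly_Mapping.lookup (a + b) i)"
    by (rule eval_monom_superset) (simp_all add: keys_add)
  also have "\<dots> = (\<Prod>i \<in> ?S. g i ^ Poly_Mapping.lookup a i) * (\<Prod>i \<in> ?S. g i ^ Poly_Mapping.lookup b i)"
    by (simp add: lookup_add power_add prod.distrib)
  also have "\<dots> = eval_monom a g * eval_monom b g"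
    by (subst (1 2) eval_monom_superset[of ?S]) auto
  finally show ?thesis .
qed

lemma eval_monom_single: "eval_monom (Poly_Mapping.single i e) g = g i ^ e"
  by (simp add: eval_monom_def)

lemma eval_monom_cong:
  "(\<And>i. i \<in> Poly_Mapping.keys a \<Longrightarrow> g i = h i) \<Longrightarrow> eval_monom a g = eval_monom a h"
  unfolding eval_monom_def by (rule prod.cong) auto

lemma const_rf_0 [simp]: "const_rf 0 = 0"
  by (simp add: const_rf_def Zero_fract_def)

lemma const_rf_1 [simp]: "const_rf 1 = 1"
  by (simp add: const_rf_def One_fract_def)

lemma const_rf_add: "const_rf (c + d) = const_rf c + const_rf d"
  by (simp add: const_rf_def single_add)

lemma const_rf_mult: "const_rf (c * d) = const_rf c * const_rf d"
  by (simp add: const_rf_def mult_single)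

lemma eval_poly_eq_eval_monom:
  "eval_poly P g = (\<Sum>a \<in> Poly_Mapping.keys P. const_rf (Poly_Mapping.lookup P a) * eval_monom a g)"
  by (simp add: eval_poly_def eval_monom_def)

lemma eval_poly_superset:
  assumes "finite S" "Poly_Mapping.keys P \<subseteq> S"
  shows "eval_poly P g = (\<Sum>a \<in> S. const_rf (Poly_Mapping.lookup P a) * eval_monom a g)"
  unfolding eval_poly_eq_eval_monom
  by (rule sum.mono_neutral_left) (use assms in \<open>auto simp: in_keys_iff\<close>)

lemma eval_poly_0 [simp]: "eval_poly 0 g = 0"
  by (simp add: eval_poly_def)

lemma eval_poly_1 [simp]: "eval_poly 1 g = 1"
  by (simp add: eval_poly_def)

lemma eval_poly_single: "eval_poly (Poly_Mapping.single a c) g = const_rf c * eval_monom a g"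
  by (simp add: eval_poly_eq_eval_monom)

lemma eval_poly_add: "eval_poly (P + Q) g = eval_poly P g + eval_poly Q g"
proof -
  let ?S = "Poly_Mapping.keys P \<union> Poly_Mapping.keys Q"
  have "eval_poly (P + Q) g = (\<Sum>a \<in> ?S. const_rf (Poly_Mapping.lookup (P + Q) a) * eval_monom a g)"
    by (rule eval_poly_superset) (simp_all add: keys_add)
  also have "\<dots> = (\<Sum>a \<in> ?S. const_rf (Poly_Mapping.lookup P a) * eval_monom a g)
     + (\<Sum>a \<in> ?S. const_rf (Poly_Mapping.lookup Q a) * eval_monom a g)"
    by (simp add: lookup_add const_rf_add distrib_right sum.distrib)
  also have "\<dots> = eval_poly P g + eval_poly Q g"
    by (subst (1 2) eval_poly_superset[of ?S]) auto
  finally show ?thesis .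
qed

lemma eval_poly_sum: "eval_poly (\<Sum>i\<in>S. F i) g = (\<Sum>i\<in>S. eval_poly (F i) g)"
  by (induction S rule: infinite_finite_induct) (auto simp: eval_poly_add)

lemma poly_mapping_sum_single:
  fixes f :: "'a \<Rightarrow>\<^sub>0 'b::comm_monoid_add"
  shows "f = (\<Sum>a\<in>Poly_Mapping.keys f. Poly_Mapping.single a (Poly_Mapping.lookup f a))"
proof (rule poly_mapping_eqI)
  fix x
  have "Poly_Mapping.lookup f x = (\<Sum>a\<in>Poly_Mapping.keys f. Poly_Mapping.lookup f a when a = x)"
    by (cases "x \<in> Poly_Mapping.keys f") (simp_all add: sum.delta when_def in_keys_iff)
  then show "Poly_Mapping.lookup f x
      = Poly_Mapping.lookup (\<Sum>a\<in>Poly_Mapping.keys f. Poly_Mapping.single a (Poly_Mapping.lookup f a)) x"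
    by (simp add: lookup_sum lookup_single)
qed

lemma eval_poly_mult: "eval_poly (P * Q) g = eval_poly P g * eval_poly Q g"
proof -
  have "P * Q = (\<Sum>a\<in>Poly_Mapping.keys P. \<Sum>b\<in>Poly_Mapping.keys Q.
       Poly_Mapping.single a (Poly_Mapping.lookup P a) * Poly_Mapping.single b (Poly_Mapping.lookup Q b))"
    by (subst (1) poly_mapping_sum_single[of P], subst (1) poly_mapping_sum_single[of Q])
      (simp add: sum_distrib_left sum_distrib_right sum.swap[where A = "Poly_Mapping.keys Q"])
  then have "eval_poly (P * Q) g = (\<Sum>a\<in>Poly_Mapping.keys P. \<Sum>b\<in>Poly_Mapping.keys Q.
      (const_rf (Poly_Mapping.lookup P a) * eval_monom a g) * (const_rf (Poly_Mapping.lookup Q b) * eval_monom b g))"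
    by (simp add: eval_poly_sum mult_single eval_poly_single const_rf_mult eval_monom_add mult_ac)
  also have "\<dots> = eval_poly P g * eval_poly Q g"
    by (simp add: eval_poly_eq_eval_monom sum_distrib_left sum_distrib_right
        sum.swap[where A = "Poly_Mapping.keys Q"] mult_ac)
  finally show ?thesis .
qed

lemma eval_poly_power: "eval_poly (P ^ e) g = eval_poly P g ^ e"
  by (induction e) (auto simp: eval_poly_mult)

lemma eval_poly_prod: "eval_poly (\<Prod>i\<in>S. F i) g = (\<Prod>i\<in>S. eval_poly (F i) g)"
  by (induction S rule: infinite_finite_induct) (auto simp: eval_poly_mult)

lemma eval_poly_cong:
  "(\<And>a i. a \<in> Poly_Mapping.keys P \<Longrightarrow> i \<in> Poly_Mapping.keys a \<Longrightarrow> g i = h i) \<Longrightarrow>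
    eval_poly P g = eval_poly P h"
  unfolding eval_poly_eq_eval_monom by (rule sum.cong[OF refl]) (metis eval_monom_cong)

lemma eval_poly_cong_poly_in:
  "poly_in A P \<Longrightarrow> (\<And>i. i \<in> A \<Longrightarrow> g i = h i) \<Longrightarrow> eval_poly P g = eval_poly P h"
  unfolding poly_in_def by (rule eval_poly_cong) auto

definition pvar :: "nat \<Rightarrow> mpoly" where
  "pvar i = Poly_Mapping.single (Poly_Mapping.single i 1) 1"

lemma eval_poly_pvar [simp]: "eval_poly (pvar i) g = g i"
  by (simp add: pvar_def eval_poly_single eval_monom_single)

lemma pvar_power: "pvar i ^ e = Poly_Mapping.single (Poly_Mapping.single i e) 1"
  by (induction e) (simp_all add: pvar_def mult_single single_add[symmetric])

lemma prod_pvar_power: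
  "(\<Prod>i\<in>S. pvar i ^ e i) = Poly_Mapping.single (\<Sum>i\<in>S. Poly_Mapping.single i (e i)) 1"
  by (induction S rule: infinite_finite_induct) (simp_all add: pvar_power mult_single)

lemma pvar_nonzero: "pvar i \<noteq> 0"
  by (metis lookup_single_eq lookup_zero one_neq_zero pvar_def)

lemma poly_in_0 [simp]: "poly_in A 0"
  by (simp add: poly_in_def)

lemma poly_in_1 [simp]: "poly_in A 1"
  by (simp add: poly_in_def)

lemma poly_in_single: "Poly_Mapping.keys a \<subseteq> A \<Longrightarrow> poly_in A (Poly_Mapping.single a c)"
  by (simp add: poly_in_def)

lemma poly_in_pvar: "i \<in> A \<Longrightarrow> poly_in A (pvar i)"
  by (simp add: poly_in_def pvar_def)

lemma poly_in_mono: "poly_in A P \<Longrightarrow> A \<subseteq> A' \<Longrightarrow> poly_in A' P"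
  unfolding poly_in_def by blast

lemma poly_in_add: "poly_in A P \<Longrightarrow> poly_in A Q \<Longrightarrow> poly_in A (P + Q)"
  unfolding poly_in_def using keys_add[of P Q] by blast

lemma poly_in_mult:
  assumes "poly_in A P" "poly_in A Q"
  shows "poly_in A (P * Q)"
  unfolding poly_in_def
proof
  fix c assume "c \<in> Poly_Mapping.keys (P * Q)"
  then obtain a b where "c = a + b" "a \<in> Poly_Mapping.keys P" "b \<in> Poly_Mapping.keys Q"
    using keys_mult[of P Q] by blast
  then show "Poly_Mapping.keys c \<subseteq> A"
    using assms keys_add[of a b] unfolding poly_in_def by blast
qed

lemma poly_in_power: "poly_in A P \<Longrightarrow> poly_in A (P ^ e)"
  by (induction e) (simp_all add: poly_in_mult)

lemma poly_in_prod: "(\<And>i. i \<in> S \<Longrightarrow> poly_in A (F i)) \<Longrightarrow> poly_in A (\<Prod>i\<in>S. F i)"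
  by (induction S rule: infinite_finite_induct) (simp_all add: poly_in_mult)

lemma poly_in_sum: "(\<And>i. i \<in> S \<Longrightarrow> poly_in A (F i)) \<Longrightarrow> poly_in A (\<Sum>i\<in>S. F i)"
  by (induction S rule: infinite_finite_induct) (simp_all add: poly_in_add)

lemma Fract_power_one: "Fract a 1 ^ e = Fract (a ^ e) (1::mpoly)"
  by (induction e) (auto simp: One_fract_def)

lemma Fract_prod_one: "(\<Prod>i\<in>S. Fract (F i) 1) = Fract (\<Prod>i\<in>S. F i) (1::mpoly)"
  by (induction S rule: infinite_finite_induct) (auto simp: One_fract_def)

lemma Fract_sum_one: "(\<Sum>i\<in>S. Fract (F i) 1) = Fract (\<Sum>i\<in>S. F i) (1::mpoly)"
  by (induction S rule: infinite_finite_induct) (auto simp: Zero_fract_def)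

lemma var_eq_Fract: "var i = Fract (pvar i) 1"
  by (simp add: var_def pvar_def)

lemma eval_poly_var: "eval_poly P var = Fract P 1"
proof -
  have monom: "eval_poly (Poly_Mapping.single a c) var = Fract (Poly_Mapping.single a c) 1" for a c
  proof -
    have "eval_poly (Poly_Mapping.single a c) var
       = Fract (Poly_Mapping.single 0 c) 1 * (\<Prod>i\<in>Poly_Mapping.keys a. Fract (pvar i ^ Poly_Mapping.lookup a i) 1)"
      by (simp add: eval_poly_single eval_monom_def const_rf_def var_eq_Fract Fract_power_one)
    also have "\<dots> = Fract (Poly_Mapping.single 0 c *
        Poly_Mapping.single (\<Sum>i\<in>Poly_Mapping.keys a. Poly_Mapping.single i (Poly_Mapping.lookup a i)) 1) 1"
      by (simp add: Fract_prod_one prod_pvar_power)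
    also have "\<dots> = Fract (Poly_Mapping.single a c) 1"
      by (simp add: mult_single poly_mapping_sum_single[of a, symmetric])
    finally show ?thesis .
  qed
  have "eval_poly P var
      = eval_poly (\<Sum>a\<in>Poly_Mapping.keys P. Poly_Mapping.single a (Poly_Mapping.lookup P a)) var"
    by (subst poly_mapping_sum_single[of P]) (rule refl)
  also have "\<dots> = Fract (\<Sum>a\<in>Poly_Mapping.keys P. Poly_Mapping.single a (Poly_Mapping.lookup P a)) 1"
    by (simp add: eval_poly_sum monom Fract_sum_one)
  also have "\<dots> = Fract P 1"
    by (simp only: poly_mapping_sum_single[of P, symmetric])
  finally show ?thesis .
qed

lemma alg_indep_var: "alg_indep A var"
  unfolding alg_indep_def eval_poly_var by (simp add: Zero_fract_def eq_fract)

lemma var_nonzero: "var i \<noteq> 0"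
  using eval_poly_var[of "pvar i"] pvar_nonzero by (simp add: Zero_fract_def eq_fract)

lemma alg_indep_nonzero:
  assumes "alg_indep A g" "i \<in> A"
  shows "g i \<noteq> 0"
  using assms pvar_nonzero poly_in_pvar[OF assms(2)] eval_poly_pvar[of i g]
  unfolding alg_indep_def by metis

lemma alg_indep_cong:
  assumes "alg_indep A g" "\<And>i. i \<in> A \<Longrightarrow> g i = h i"
  shows "alg_indep A h"
  using assms eval_poly_cong_poly_in unfolding alg_indep_def by metis

lemma gen_fieldI:
  "poly_in A P \<Longrightarrow> poly_in A Q \<Longrightarrow> eval_poly Q g \<noteq> 0 \<Longrightarrow> f = eval_poly P g / eval_poly Q g \<Longrightarrow>
    f \<in> gen_field A g"
  unfolding gen_field_def by blast

lemma gen_field_eval_poly: "poly_in A P \<Longrightarrow> eval_poly P g \<in> gen_field A g"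
  by (rule gen_fieldI[of A P 1]) auto

lemma gen_field_generator: "i \<in> A \<Longrightarrow> g i \<in> gen_field A g"
  using gen_field_eval_poly[OF poly_in_pvar, of i A g] by simp

lemma gen_field_divide:
  assumes "f \<in> gen_field A g" "h \<in> gen_field A g"
  shows "f / h \<in> gen_field A g"
proof -
  obtain P Q P' Q' where PQ: "poly_in A P" "poly_in A Q" "eval_poly Q g \<noteq> 0"
      "f = eval_poly P g / eval_poly Q g"
    and PQ': "poly_in A P'" "poly_in A Q'" "eval_poly Q' g \<noteq> 0" "h = eval_poly P' g / eval_poly Q' g"
    using assms unfolding gen_field_def by blast
  show ?thesis
  proof (cases "eval_poly P' g = 0")
    case True
    then show ?thesis using PQ' gen_field_eval_poly[of A 0 g] by simp
  next
    case False
    show ?thesis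
      by (rule gen_fieldI[of A "P * Q'" "Q * P'"])
        (use PQ PQ' False in \<open>auto intro!: poly_in_mult simp: eval_poly_mult\<close>)
  qed
qed

lemma gen_field_eval_poly_generated:
  assumes "\<And>i. i \<in> A' \<Longrightarrow> h i \<in> gen_field A g" "poly_in A' P"
  shows "eval_poly P h \<in> gen_field A g"
proof -
  have closed: "f + f' \<in> gen_field A g" "f * f' \<in> gen_field A g"
    if f: "f \<in> gen_field A g" and f': "f' \<in> gen_field A g" for f f'
  proof -
    obtain P Q P' Q' where PQ: "poly_in A P" "poly_in A Q" "eval_poly Q g \<noteq> 0"
        "f = eval_poly P g / eval_poly Q g"
      and PQ': "poly_in A P'" "poly_in A Q'" "eval_poly Q' g \<noteq> 0" "f' = eval_poly P' g / eval_poly Q' g"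
      using f f' unfolding gen_field_def by blast
    show "f + f' \<in> gen_field A g"
      by (rule gen_fieldI[of A "P * Q' + P' * Q" "Q * Q'"])
        (use PQ PQ' in \<open>auto intro!: poly_in_add poly_in_mult simp: eval_poly_add eval_poly_mult add_frac_eq\<close>)
    show "f * f' \<in> gen_field A g"
      by (rule gen_fieldI[of A "P * P'" "Q * Q'"])
        (use PQ PQ' in \<open>auto intro!: poly_in_mult simp: eval_poly_mult\<close>)
  qed
  have const: "const_rf c \<in> gen_field A g" for c
    using gen_field_eval_poly[of A "Poly_Mapping.single 0 c" g] by (simp add: eval_poly_single poly_in_def)
  have sum: "(\<And>i. i \<in> S \<Longrightarrow> F i \<in> gen_field A g) \<Longrightarrow> (\<Sum>i\<in>S. F i) \<in> gen_field A g" for S F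
    by (induction S rule: infinite_finite_induct) (auto intro: closed const[of 0, simplified])
  have prod: "(\<And>i. i \<in> S \<Longrightarrow> F i \<in> gen_field A g) \<Longrightarrow> (\<Prod>i\<in>S. F i) \<in> gen_field A g" for S F
    by (induction S rule: infinite_finite_induct) (auto intro: closed const[of 1, simplified])
  have power: "f \<in> gen_field A g \<Longrightarrow> f ^ e \<in> gen_field A g" for f e
    by (induction e) (auto intro: closed const[of 1, simplified])
  show ?thesis
    unfolding eval_poly_def
  proof (intro sum closed(2)[OF const] prod power)
    fix a i assume "a \<in> Poly_Mapping.keys P" "i \<in> Poly_Mapping.keys a"
    then show "h i \<in> gen_field A g" using assms unfolding poly_in_def by blast
  qed
qed

lemma gen_field_subset:
  assumes "\<And>i. i \<in> A' \<Longrightarrow> h i \<in> gen_field A g"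
  shows "gen_field A' h \<subseteq> gen_field A g"
proof
  fix f assume "f \<in> gen_field A' h"
  then obtain P Q where "poly_in A' P" "poly_in A' Q" "f = eval_poly P h / eval_poly Q h"
    unfolding gen_field_def by blast
  then show "f \<in> gen_field A g"
    using gen_field_divide gen_field_eval_poly_generated[OF assms] by simp
qed

lemma gen_field_cong:
  assumes "\<And>i. i \<in> A \<Longrightarrow> g i = h i"
  shows "gen_field A g = gen_field A h"
proof (rule subset_antisym)
  show "gen_field A g \<subseteq> gen_field A h"
    by (rule gen_field_subset) (simp add: assms gen_field_generator)
  show "gen_field A h \<subseteq> gen_field A g"
    by (rule gen_field_subset) (simp add: assms[symmetric] gen_field_generator)
qed

section \<open>Laurent monomials and subtraction-free expressions\<close>

lemma laurent_mono_nonzero: "laurent_mono n M e \<noteq> 0"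
  by (simp add: laurent_mono_def var_nonzero)

lemma laurent_mono_0: "laurent_mono n M (\<lambda>_. 0) = 1"
  by (simp add: laurent_mono_def)

lemma laurent_mono_add: "laurent_mono n M (\<lambda>l. e l + f l) = laurent_mono n M e * laurent_mono n M f"
  by (simp add: laurent_mono_def power_int_add var_nonzero prod.distrib)

lemma laurent_mono_sum: "laurent_mono n M (\<lambda>l. \<Sum>i\<in>S. e i l) = (\<Prod>i\<in>S. laurent_mono n M (e i))"
  by (induction S rule: infinite_finite_induct) (simp_all add: laurent_mono_0 laurent_mono_add)

lemma prod_power_int_distrib: "(\<Prod>i\<in>S. f i powi z) = (\<Prod>i\<in>S. f i :: 'a::field) powi z"
  by (induction S rule: infinite_finite_induct) (simp_all add: power_int_mult_distrib)

lemma laurent_mono_scale: "laurent_mono n M (\<lambda>l. z * e l) = laurent_mono n M e powi z"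
  unfolding laurent_mono_def prod_power_int_distrib[symmetric]
  by (simp add: power_int_mult[symmetric] mult.commute)

lemma laurent_mono_minus: "laurent_mono n M (\<lambda>l. - e l) = 1 / laurent_mono n M e"
  using laurent_mono_add[of n M "\<lambda>l. - e l" e] laurent_mono_nonzero[of n M e]
  by (simp add: laurent_mono_0 eq_divide_eq)

lemma laurent_mono_diff: "laurent_mono n M (\<lambda>l. e l - f l) = laurent_mono n M e / laurent_mono n M f"
  using laurent_mono_add[of n M e "\<lambda>l. - f l"] by (simp add: laurent_mono_minus)

lemma laurent_mono_nonneg:
  "(\<And>l. 0 \<le> e l) \<Longrightarrow> laurent_mono n M e = (\<Prod>j\<in>{n+1..M}. var j ^ nat (e j))"
  unfolding laurent_mono_def by (rule prod.cong[OF refl]) (simp add: power_int_def)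

lemma sf_1: "1 \<le> M \<Longrightarrow> 1 \<in> sf M"
  using sf_div[OF sf_var sf_var, of 1 M 1] var_nonzero[of 1] by simp

lemma sf_power: "1 \<le> M \<Longrightarrow> f \<in> sf M \<Longrightarrow> f ^ e \<in> sf M"
  by (induction e) (simp_all add: sf_1 sf_mult)

lemma sf_inverse: "1 \<le> M \<Longrightarrow> f \<in> sf M \<Longrightarrow> 1 / f \<in> sf M"
  by (rule sf_div) (simp_all add: sf_1)

lemma sf_power_int: "1 \<le> M \<Longrightarrow> f \<in> sf M \<Longrightarrow> f powi z \<in> sf M"
  unfolding power_int_def using sf_power sf_inverse by (simp add: inverse_eq_divide)

lemma sf_prod: "1 \<le> M \<Longrightarrow> (\<And>i. i \<in> S \<Longrightarrow> f i \<in> sf M) \<Longrightarrow> (\<Prod>i\<in>S. f i) \<in> sf M"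
  by (induction S rule: infinite_finite_induct) (simp_all add: sf_1 sf_mult)

lemma sf_laurent_mono: "1 \<le> M \<Longrightarrow> laurent_mono n M e \<in> sf M"
  unfolding laurent_mono_def by (rule sf_prod) (auto intro!: sf_power_int sf_var)

section \<open>Exchanging one generator\<close>

definition monom_del :: "nat \<Rightarrow> (nat \<Rightarrow>\<^sub>0 nat) \<Rightarrow> (nat \<Rightarrow>\<^sub>0 nat)" where
  "monom_del k a = Poly_Mapping.update k 0 a"

lemma lookup_monom_del:
  "Poly_Mapping.lookup (monom_del k a) i = (if i = k then 0 else Poly_Mapping.lookup a i)"
  by (simp add: monom_del_def lookup_update)

lemma keys_monom_del: "Poly_Mapping.keys (monom_del k a) = Poly_Mapping.keys a - {k}"
  by (simp add: monom_del_def keys_update)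

lemma monom_del_add_single: "monom_del k a + Poly_Mapping.single k (Poly_Mapping.lookup a k) = a"
  by (rule poly_mapping_eqI) (simp add: lookup_add lookup_monom_del lookup_single when_def)

text \<open>The coefficient of \<open>X\<^sub>k\<^sup>d\<close> when a polynomial is viewed as a polynomial in \<open>X\<^sub>k\<close>.\<close>

definition coeff_var :: "nat \<Rightarrow> nat \<Rightarrow> mpoly \<Rightarrow> mpoly" where
  "coeff_var k d P = (\<Sum>a \<in> {a \<in> Poly_Mapping.keys P. Poly_Mapping.lookup a k = d}.
      Poly_Mapping.single (monom_del k a) (Poly_Mapping.lookup P a))"

lemma poly_in_coeff_var: "poly_in A P \<Longrightarrow> poly_in (A - {k}) (coeff_var k d P)"
  unfolding coeff_var_def
  by (rule poly_in_sum, rule poly_in_single) (auto simp: poly_in_def keys_monom_del)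

lemma poly_expand_var:
  "P = (\<Sum>d \<in> (\<lambda>a. Poly_Mapping.lookup a k) ` Poly_Mapping.keys P. coeff_var k d P * pvar k ^ d)"
proof -
  let ?deg = "\<lambda>a. Poly_Mapping.lookup a k"
  let ?term = "\<lambda>a. Poly_Mapping.single a (Poly_Mapping.lookup P a)"
  have "P = (\<Sum>a \<in> Poly_Mapping.keys P. ?term a)"
    by (rule poly_mapping_sum_single)
  also have "\<dots> = (\<Sum>d \<in> ?deg ` Poly_Mapping.keys P. \<Sum>a \<in> {a \<in> Poly_Mapping.keys P. ?deg a = d}. ?term a)"
    by (rule sum.image_gen) simp
  also have "\<dots> = (\<Sum>d \<in> ?deg ` Poly_Mapping.keys P. coeff_var k d P * pvar k ^ d)"
  proof (rule sum.cong[OF refl])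
    fix d
    have "?term a = Poly_Mapping.single (monom_del k a) (Poly_Mapping.lookup P a) * pvar k ^ d"
      if "?deg a = d" for a
      using monom_del_add_single[of k a] that by (simp add: pvar_power mult_single)
    then show "(\<Sum>a \<in> {a \<in> Poly_Mapping.keys P. ?deg a = d}. ?term a) = coeff_var k d P * pvar k ^ d"
      unfolding coeff_var_def sum_distrib_right by (intro sum.cong) auto
  qed
  finally show ?thesis .
qed

definition homogeneous_in_var :: "nat \<Rightarrow> nat \<Rightarrow> mpoly \<Rightarrow> bool" where
  "homogeneous_in_var k e Q \<longleftrightarrow> (\<forall>a \<in> Poly_Mapping.keys Q. Poly_Mapping.lookup a k = e)"

lemma homogeneous_in_var_mult:
  assumes "homogeneous_in_var k e P" "homogeneous_in_var k e' Q"
  shows "homogeneous_in_var k (e + e') (P * Q)"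
  unfolding homogeneous_in_var_def
proof
  fix c assume "c \<in> Poly_Mapping.keys (P * Q)"
  then obtain a b where "c = a + b" "a \<in> Poly_Mapping.keys P" "b \<in> Poly_Mapping.keys Q"
    using keys_mult[of P Q] by blast
  then show "Poly_Mapping.lookup c k = e + e'"
    using assms by (simp add: homogeneous_in_var_def lookup_add)
qed

lemma homogeneous_in_var_0_power:
  "homogeneous_in_var k 0 P \<Longrightarrow> homogeneous_in_var k 0 (P ^ d)"
proof (induction d)
  case 0
  show ?case by (simp add: homogeneous_in_var_def)
next
  case (Suc d)
  then show ?case using homogeneous_in_var_mult[of k 0 P 0 "P ^ d"] by simp
qed

lemma homogeneous_in_var_poly_in: "poly_in A P \<Longrightarrow> k \<notin> A \<Longrightarrow> homogeneous_in_var k 0 P"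
  unfolding homogeneous_in_var_def poly_in_def by (meson in_keys_iff subsetD)

lemma homogeneous_in_var_pvar_power: "homogeneous_in_var k e (pvar k ^ e)"
  by (simp add: homogeneous_in_var_def pvar_power)

lemma sum_homogeneous_in_var_eq_0:
  assumes "finite D" "\<And>d. d \<in> D \<Longrightarrow> homogeneous_in_var k (h d) (Q d)" "inj_on h D"
    and "(\<Sum>d\<in>D. Q d) = 0" "d\<^sub>0 \<in> D"
  shows "Q d\<^sub>0 = 0"
proof (rule ccontr)
  assume "Q d\<^sub>0 \<noteq> 0"
  then obtain a where a: "a \<in> Poly_Mapping.keys (Q d\<^sub>0)"
    by fastforce
  have other: "Poly_Mapping.lookup (Q d) a = 0" if "d \<in> D - {d\<^sub>0}" for d
  proof (rule ccontr)
    assume "Poly_Mapping.lookup (Q d) a \<noteq> 0"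
    then have "Poly_Mapping.lookup a k = h d"
      using assms(2)[of d] that by (auto simp: homogeneous_in_var_def in_keys_iff)
    moreover have "Poly_Mapping.lookup a k = h d\<^sub>0"
      using assms(2,5) a unfolding homogeneous_in_var_def by blast
    ultimately show False
      using assms(3,5) that by (auto dest: inj_onD)
  qed
  have "0 = (\<Sum>d\<in>D. Poly_Mapping.lookup (Q d) a)"
    by (metis assms(4) lookup_sum lookup_zero)
  also have "\<dots> = Poly_Mapping.lookup (Q d\<^sub>0) a"
    using assms(1,5) other by (simp add: sum.remove)
  finally show False
    using a by (simp add: in_keys_iff)
qed

text \<open>Clearing the denominators \<open>g k\<^sup>d\<close> of \<open>P(g')\<close> turns it into a polynomial expression in \<open>g\<close>.\<close>

lemma eval_poly_exchange_cleared:
  assumes U: "poly_in (A - {k}) U" and P: "poly_in A P"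
    and same: "\<And>i. i \<in> A - {k} \<Longrightarrow> g' i = g i" and exchange: "g k * g' k = eval_poly U g"
  defines "D \<equiv> (\<lambda>a. Poly_Mapping.lookup a k) ` Poly_Mapping.keys P"
  defines "N \<equiv> Max D"
  shows "eval_poly (\<Sum>d\<in>D. coeff_var k d P * U ^ d * pvar k ^ (N - d)) g = g k ^ N * eval_poly P g'"
proof -
  have "eval_poly (coeff_var k d P * U ^ d * pvar k ^ (N - d)) g
      = g k ^ N * (eval_poly (coeff_var k d P) g' * g' k ^ d)" if "d \<in> D" for d
  proof -
    have "eval_poly (coeff_var k d P) g = eval_poly (coeff_var k d P) g'"
      using poly_in_coeff_var[OF P] same by (rule eval_poly_cong_poly_in[symmetric])
    moreover have "g k ^ N = g k ^ (N - d) * g k ^ d"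
      using that by (simp add: D_def N_def flip: power_add)
    ultimately show ?thesis
      by (simp add: eval_poly_mult eval_poly_power exchange[symmetric] power_mult_distrib)
  qed
  then have "eval_poly (\<Sum>d\<in>D. coeff_var k d P * U ^ d * pvar k ^ (N - d)) g
      = (\<Sum>d\<in>D. g k ^ N * (eval_poly (coeff_var k d P) g' * g' k ^ d))"
    unfolding eval_poly_sum by (rule sum.cong[OF refl])
  also have "\<dots> = g k ^ N * eval_poly P g'"
    by (subst (2) poly_expand_var[of P k])
      (simp add: D_def eval_poly_sum eval_poly_mult eval_poly_power sum_distrib_left)
  finally show ?thesis .
qed

lemma alg_indep_exchange:
  assumes indep: "alg_indep A g" and "k \<in> A" and "U \<noteq> 0" and U: "poly_in (A - {k}) U"
    and same: "\<And>i. i \<in> A - {k} \<Longrightarrow> g' i = g i" and exchange: "g k * g' k = eval_poly U g"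
  shows "alg_indep A g'"
  unfolding alg_indep_def
proof (intro allI impI)
  fix P assume P: "poly_in A P" and "eval_poly P g' = 0"
  define D where "D = (\<lambda>a. Poly_Mapping.lookup a k) ` Poly_Mapping.keys P"
  define N where "N = Max D"
  define R where "R d = coeff_var k d P * U ^ d * pvar k ^ (N - d)" for d
  have C: "poly_in (A - {k}) (coeff_var k d P)" for d
    using P by (rule poly_in_coeff_var)
  have le_N: "d \<in> D \<Longrightarrow> d \<le> N" for d
    by (simp add: D_def N_def)
  have "eval_poly (\<Sum>d\<in>D. R d) g = 0"
    using eval_poly_exchange_cleared[OF U P same exchange] \<open>eval_poly P g' = 0\<close>
    by (simp add: R_def D_def N_def)
  moreover have "poly_in A (\<Sum>d\<in>D. R d)"
    using C U \<open>k \<in> A\<close> unfolding R_def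
    by (intro poly_in_sum poly_in_mult poly_in_power poly_in_pvar) (auto intro: poly_in_mono[of "A - {k}"])
  ultimately have "(\<Sum>d\<in>D. R d) = 0"
    using indep unfolding alg_indep_def by simp
  moreover have "homogeneous_in_var k (N - d) (R d)" for d
    using homogeneous_in_var_mult[OF homogeneous_in_var_mult homogeneous_in_var_pvar_power]
      homogeneous_in_var_poly_in[OF C] homogeneous_in_var_0_power[OF homogeneous_in_var_poly_in[OF U]]
    unfolding R_def by fastforce
  moreover have "inj_on (\<lambda>d. N - d) D"
    by (rule inj_onI) (metis le_N diff_diff_cancel)
  ultimately have "R d = 0" if "d \<in> D" for d
    using that by (intro sum_homogeneous_in_var_eq_0[where h = "\<lambda>d. N - d"]) (auto simp: D_def)
  then have "coeff_var k d P = 0" if "d \<in> D" for d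
    using that \<open>U \<noteq> 0\<close> pvar_nonzero by (simp add: R_def)
  then show "P = 0"
    by (subst poly_expand_var[of P k]) (simp add: D_def)
qed

lemma gen_field_exchange:
  assumes indep: "alg_indep A g" and "k \<in> A" and "U \<noteq> 0" and U: "poly_in (A - {k}) U"
    and same: "\<And>i. i \<in> A - {k} \<Longrightarrow> g' i = g i" and exchange: "g k * g' k = eval_poly U g"
  shows "gen_field A g' = gen_field A g"
proof -
  have U_A: "poly_in A U"
    using U by (rule poly_in_mono) blast
  have "g k \<noteq> 0"
    using indep \<open>k \<in> A\<close> by (rule alg_indep_nonzero)
  moreover have "eval_poly U g' = eval_poly U g"
    using U same by (rule eval_poly_cong_poly_in)
  moreover have "eval_poly U g \<noteq> 0"
    using indep U_A \<open>U \<noteq> 0\<close> unfolding alg_indep_def by blast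
  moreover have "g' k \<noteq> 0"
    using exchange \<open>eval_poly U g \<noteq> 0\<close> by auto
  ultimately have gk: "g k = eval_poly U g' / g' k" and g'k: "g' k = eval_poly U g / g k"
    using exchange by (auto simp: field_simps)
  have "g' i \<in> gen_field A g" if "i \<in> A" for i
    using that same gen_field_generator[of i A g]
      gen_field_divide[OF gen_field_eval_poly[OF U_A] gen_field_generator[OF \<open>k \<in> A\<close>]]
    by (cases "i = k") (simp_all add: g'k)
  moreover have "g i \<in> gen_field A g'" if "i \<in> A" for i
    using that same gen_field_generator[of i A g']
      gen_field_divide[OF gen_field_eval_poly[OF U_A] gen_field_generator[OF \<open>k \<in> A\<close>]]
    by (cases "i = k") (simp_all add: gk)
  ultimately show ?thesis
    by (intro subset_antisym gen_field_subset)
qed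

definition full_cluster :: "nat \<Rightarrow> (nat \<Rightarrow> rfun) \<Rightarrow> nat \<Rightarrow> rfun" where
  "full_cluster n x i = (if i \<le> n then x i else var i)"

lemma monomial_sum_nonzero: "Poly_Mapping.single a (1::rat) + Poly_Mapping.single b 1 \<noteq> 0"
proof
  assume "Poly_Mapping.single a (1::rat) + Poly_Mapping.single b 1 = 0"
  then have "Poly_Mapping.lookup (Poly_Mapping.single a (1::rat) + Poly_Mapping.single b 1) a = 0"
    by simp
  then show False
    by (simp add: lookup_add lookup_single when_def split: if_splits)
qed

lemma x_mutation_rel_exchange_poly:
  assumes rel: "x_mutation_rel n M k B y x x'" and k: "k \<in> {1..n}" and "n \<le> M" and "B k k = 0"
  obtains U where "U \<noteq> 0" "poly_in ({1..M} - {k}) U"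
    "full_cluster n x k * full_cluster n x' k = eval_poly U (full_cluster n x)"
proof -
  let ?pos = "{i \<in> {1..n}. 0 < B i k}" and ?neg = "{i \<in> {1..n}. B i k < 0}"
  define E_pos where "E_pos = (\<Prod>j\<in>{n+1..M}. pvar j ^ nat (max (y k j) 0))"
  define E_neg where "E_neg = (\<Prod>j\<in>{n+1..M}. pvar j ^ nat (max (- y k j) 0))"
  define F_pos where "F_pos = (\<Prod>i\<in>?pos. pvar i ^ nat (B i k))"
  define F_neg where "F_neg = (\<Prod>i\<in>?neg. pvar i ^ nat (- B i k))"
  define L_pos where "L_pos = laurent_mono n M (\<lambda>l. max (y k l) 0)"
  define L_neg where "L_neg = laurent_mono n M (\<lambda>l. max (- y k l) 0)"
  \<comment> \<open>\<open>y\<^sub>k \<oplus> 1\<close> is the inverse of the negative part \<open>L_neg\<close> of \<open>y\<^sub>k\<close>, so the exchange relation is polynomial\<close>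
  define U where "U = E_pos * F_pos + E_neg * F_neg"
  let ?g = "full_cluster n x"
  let ?Q_pos = "\<Prod>i\<in>?pos. x i ^ nat (B i k)" and ?Q_neg = "\<Prod>i\<in>?neg. x i ^ nat (- B i k)"
  have y_split: "(\<lambda>l. max (y k l) 0 - max (- y k l) 0) = y k"
    and trop_split: "(\<lambda>l. - max (- y k l) 0) = trop_add (y k) (\<lambda>_. 0)"
    by (auto simp: trop_add_def max_def min_def)
  have "L_neg \<noteq> 0"
    by (simp add: L_neg_def laurent_mono_nonzero)
  have "?g k * full_cluster n x' k = (L_pos / L_neg * ?Q_pos + ?Q_neg) / (1 / L_neg)"
    using rel k laurent_mono_diff[of n M "\<lambda>l. max (y k l) 0" "\<lambda>l. max (- y k l) 0"]
      laurent_mono_minus[of n M "\<lambda>l. max (- y k l) 0"]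
    by (simp add: x_mutation_rel_def full_cluster_def L_pos_def L_neg_def y_split trop_split)
  also have "\<dots> = L_pos * ?Q_pos + L_neg * ?Q_neg"
    using \<open>L_neg \<noteq> 0\<close> by (simp add: field_simps)
  also have "\<dots> = eval_poly U ?g"
    unfolding U_def E_pos_def E_neg_def F_pos_def F_neg_def L_pos_def L_neg_def
    by (simp add: eval_poly_add eval_poly_mult eval_poly_prod eval_poly_power full_cluster_def
        laurent_mono_nonneg)
  finally have "?g k * full_cluster n x' k = eval_poly U ?g" .
  moreover have "U \<noteq> 0"
    unfolding U_def E_pos_def E_neg_def F_pos_def F_neg_def
    by (simp add: prod_pvar_power mult_single monomial_sum_nonzero)
  moreover have "poly_in ({1..M} - {k}) U"
    unfolding U_def E_pos_def E_neg_def F_pos_def F_neg_def using k \<open>n \<le> M\<close> \<open>B k k = 0\<close>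
    by (intro poly_in_add poly_in_mult poly_in_prod poly_in_power poly_in_pvar) auto
  ultimately show ?thesis
    using that by blast
qed

lemma x_mutation_rel_free_generators:
  assumes rel: "x_mutation_rel n M k B y x x'" and k: "k \<in> {1..n}" and "n \<le> M" and "B k k = 0"
    and indep: "alg_indep {1..M} (full_cluster n x)"
  shows "alg_indep {1..M} (full_cluster n x')"
    and "gen_field {1..M} (full_cluster n x') = gen_field {1..M} (full_cluster n x)"
proof -
  obtain U where U: "U \<noteq> 0" "poly_in ({1..M} - {k}) U"
    "full_cluster n x k * full_cluster n x' k = eval_poly U (full_cluster n x)"
    using x_mutation_rel_exchange_poly[OF assms(1-4)] .
  have "k \<in> {1..M}"
    using k \<open>n \<le> M\<close> by simp
  moreover have "full_cluster n x' i = full_cluster n x i" if "i \<in> {1..M} - {k}" for i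
    using rel that by (simp add: x_mutation_rel_def full_cluster_def)
  ultimately show "alg_indep {1..M} (full_cluster n x')"
    and "gen_field {1..M} (full_cluster n x') = gen_field {1..M} (full_cluster n x)"
    using alg_indep_exchange gen_field_exchange indep U by blast+
qed

section \<open>Matrix mutation\<close>

lemma sgn_mult_max_eq:
  fixes p q :: int
  shows "sgn p * max (p * q) 0 = p * max q 0 + q * max (- p) 0"
  by (cases p rule: linorder_cases[of _ 0]; cases "0 \<le> q")
    (auto simp: mult_le_0_iff zero_le_mult_iff max_def)

lemma sum_filter_pos:
  fixes b a :: "nat \<Rightarrow> int"
  shows "finite I \<Longrightarrow> (\<Sum>i\<in>{i\<in>I. 0 < b i}. b i * a i) = (\<Sum>i\<in>I. max (b i) 0 * a i)"
  by (simp add: sum.inter_filter) (rule sum.cong, auto)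

lemma sum_filter_neg:
  fixes b a :: "nat \<Rightarrow> int"
  shows "finite I \<Longrightarrow> (\<Sum>i\<in>{i\<in>I. b i < 0}. - b i * a i) = (\<Sum>i\<in>I. max (- b i) 0 * a i)"
  by (simp add: sum.inter_filter) (rule sum.cong, auto)

lemma sum_mutated_column_self:
  fixes a a' :: "nat \<Rightarrow> int"
  assumes "matrix_mutation_rel n k B B'" "k \<in> {1..n}" "B k k = 0"
    and "\<And>i. i \<in> {1..n} \<Longrightarrow> i \<noteq> k \<Longrightarrow> a' i = a i"
  shows "(\<Sum>i\<in>{1..n}. B' i k * a' i) = - (\<Sum>i\<in>{1..n}. B i k * a i)"
  unfolding sum_negf[symmetric]
  by (rule sum.cong) (use assms in \<open>auto simp: matrix_mutation_rel_def\<close>)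

lemma sum_mutated_column:
  fixes a a' :: "nat \<Rightarrow> int"
  assumes mut: "matrix_mutation_rel n k B B'" and k: "k \<in> {1..n}" and j: "j \<in> {1..n}" "j \<noteq> k"
    and "B k k = 0" and same: "\<And>i. i \<in> {1..n} \<Longrightarrow> i \<noteq> k \<Longrightarrow> a' i = a i"
  shows "(\<Sum>i\<in>{1..n}. B' i j * a' i) = (\<Sum>i\<in>{1..n}. B i j * a i)
    + max (B k j) 0 * (\<Sum>i\<in>{1..n}. B i k * a i) + B k j * (\<Sum>i\<in>{1..n}. max (- B i k) 0 * a i)
    - B k j * (a k + a' k)"
proof -
  define G where "G i = (B i j + B i k * max (B k j) 0 + B k j * max (- B i k) 0) * a i" for i
  have "(\<Sum>i\<in>{1..n}. B' i j * a' i) = B' k j * a' k + (\<Sum>i\<in>{1..n} - {k}. B' i j * a' i)"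
    using k by (simp add: sum.remove)
  also have "(\<Sum>i\<in>{1..n} - {k}. B' i j * a' i) = (\<Sum>i\<in>{1..n} - {k}. G i)"
    using mut j same sgn_mult_max_eq by (intro sum.cong) (auto simp: matrix_mutation_rel_def G_def)
  also have "\<dots> = (\<Sum>i\<in>{1..n}. G i) - B k j * a k"
    using k \<open>B k k = 0\<close> by (simp add: sum.remove G_def)
  also have "B' k j = - B k j"
    using mut k j by (simp add: matrix_mutation_rel_def)
  finally show ?thesis
    by (simp add: G_def algebra_simps sum.distrib sum_distrib_left)
qed

section \<open>The specialization homomorphisms\<close>

locale coefficient_specialization =
  fixes n m mbar :: nat
    and \<phi> :: "rfun \<Rightarrow> trop" and \<psi> :: "rfun \<Rightarrow> rfun"
  assumes n_pos: "0 < n" and n_le_m: "n \<le> m" and n_le_mbar: "n \<le> mbar"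
    and hom_phi: "sf_hom_trop m n mbar \<phi>"
    and hom_psi: "sf_hom m mbar \<psi>"
    and psi_low: "\<forall>i \<in> {1..n}. \<psi> (var i) = var i * laurent_mono n mbar (\<phi> (var i))"
    and psi_high: "\<forall>i \<in> {n+1..m}. \<psi> (var i) = laurent_mono n mbar (\<phi> (var i))"
begin

abbreviation L :: "trop \<Rightarrow> rfun" where
  "L \<equiv> laurent_mono n m"

abbreviation L_bar :: "trop \<Rightarrow> rfun" where
  "L_bar \<equiv> laurent_mono n mbar"

lemma one_le_m: "1 \<le> m"
  using n_pos n_le_m by simp

lemmas sf_closed = sf_1[OF one_le_m] sf_power[OF one_le_m] sf_inverse[OF one_le_m]
  sf_power_int[OF one_le_m] sf_prod[OF one_le_m] sf_laurent_mono[OF one_le_m] sf.sf_mult sf.sf_add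

lemma phi_mult: "f \<in> sf m \<Longrightarrow> g \<in> sf m \<Longrightarrow> \<phi> (f * g) l = \<phi> f l + \<phi> g l"
  using hom_phi unfolding sf_hom_trop_def trop_mult_def by simp

lemma phi_add: "f \<in> sf m \<Longrightarrow> g \<in> sf m \<Longrightarrow> \<phi> (f + g) l = min (\<phi> f l) (\<phi> g l)"
  using hom_phi unfolding sf_hom_trop_def trop_add_def by simp

lemma phi_1: "\<phi> 1 = (\<lambda>_. 0)"
  using phi_mult[of 1 1] sf_closed by fastforce

lemma phi_power: "f \<in> sf m \<Longrightarrow> \<phi> (f ^ e) l = int e * \<phi> f l"
  by (induction e) (simp_all add: phi_1 phi_mult sf_closed algebra_simps)

lemma phi_inverse: "f \<in> sf m \<Longrightarrow> f \<noteq> 0 \<Longrightarrow> \<phi> (1 / f) l = - \<phi> f l"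
  using phi_mult[of "1 / f" f l] by (simp add: phi_1 sf_closed)

lemma phi_power_int:
  assumes "f \<in> sf m" "f \<noteq> 0"
  shows "\<phi> (f powi z) l = z * \<phi> f l"
proof (cases "0 \<le> z")
  case False
  then have "f powi z = (1 / f) ^ nat (- z)"
    by (simp add: power_int_def inverse_eq_divide)
  with False show ?thesis
    using assms by (simp add: phi_power phi_inverse sf_closed)
qed (use assms in \<open>simp add: power_int_def phi_power\<close>)

lemma phi_prod: "(\<And>i. i \<in> S \<Longrightarrow> f i \<in> sf m) \<Longrightarrow> \<phi> (\<Prod>i\<in>S. f i) l = (\<Sum>i\<in>S. \<phi> (f i) l)"
  by (induction S rule: infinite_finite_induct) (simp_all add: phi_1 phi_mult sf_closed)

lemma var_frozen_sf: "j \<in> {n+1..m} \<Longrightarrow> var j \<in> sf m"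
  by (rule sf_var) simp

lemma phi_laurent_mono: "\<phi> (L e) l = (\<Sum>j\<in>{n+1..m}. e j * \<phi> (var j) l)"
proof -
  have "\<phi> (L e) l = (\<Sum>j\<in>{n+1..m}. \<phi> (var j powi e j) l)"
    unfolding laurent_mono_def by (rule phi_prod) (simp add: sf_closed var_frozen_sf)
  then show ?thesis
    by (simp add: phi_power_int var_frozen_sf var_nonzero)
qed

lemma psi_mult: "f \<in> sf m \<Longrightarrow> g \<in> sf m \<Longrightarrow> \<psi> (f * g) = \<psi> f * \<psi> g"
  using hom_psi unfolding sf_hom_def by simp

lemma psi_add: "f \<in> sf m \<Longrightarrow> g \<in> sf m \<Longrightarrow> \<psi> (f + g) = \<psi> f + \<psi> g"
  using hom_psi unfolding sf_hom_def by simp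

lemma psi_1: "\<psi> 1 = 1"
proof -
  have "\<psi> (var 1) = \<psi> (var 1) * \<psi> 1"
    using psi_mult[of "var 1" 1] one_le_m by (simp add: sf_var sf_closed)
  moreover have "\<psi> (var 1) \<noteq> 0"
    using psi_low n_pos by (simp add: var_nonzero laurent_mono_nonzero)
  ultimately show ?thesis
    by simp
qed

lemma psi_inverse:
  assumes "f \<in> sf m" "f \<noteq> 0"
  shows "\<psi> (1 / f) = 1 / \<psi> f" and "\<psi> f \<noteq> 0"
proof -
  have "\<psi> (1 / f) * \<psi> f = 1"
    using assms psi_mult[of "1 / f" f] by (simp add: psi_1 sf_closed)
  then show "\<psi> (1 / f) = 1 / \<psi> f" and "\<psi> f \<noteq> 0"
    by (auto simp: eq_divide_eq)
qed

lemma psi_power: "f \<in> sf m \<Longrightarrow> \<psi> (f ^ e) = \<psi> f ^ e"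
  by (induction e) (simp_all add: psi_1 psi_mult sf_closed)

lemma psi_power_int:
  assumes "f \<in> sf m" "f \<noteq> 0"
  shows "\<psi> (f powi z) = \<psi> f powi z"
proof (cases "0 \<le> z")
  case False
  then have "f powi z = (1 / f) ^ nat (- z)"
    by (simp add: power_int_def inverse_eq_divide)
  with False show ?thesis
    using assms by (simp add: psi_power psi_inverse sf_closed power_int_def inverse_eq_divide)
qed (use assms in \<open>simp add: power_int_def psi_power\<close>)

lemma psi_prod: "(\<And>i. i \<in> S \<Longrightarrow> f i \<in> sf m) \<Longrightarrow> \<psi> (\<Prod>i\<in>S. f i) = (\<Prod>i\<in>S. \<psi> (f i))"
  by (induction S rule: infinite_finite_induct) (simp_all add: psi_1 psi_mult sf_closed)

lemma psi_laurent_mono: "\<psi> (L e) = L_bar (\<phi> (L e))"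
proof -
  have "\<psi> (L e) = (\<Prod>j\<in>{n+1..m}. \<psi> (var j powi e j))"
    unfolding laurent_mono_def by (rule psi_prod) (simp add: sf_closed var_frozen_sf)
  also have "\<dots> = (\<Prod>j\<in>{n+1..m}. \<psi> (var j) powi e j)"
    by (simp add: psi_power_int var_frozen_sf var_nonzero)
  also have "\<dots> = (\<Prod>j\<in>{n+1..m}. L_bar (\<lambda>l. e j * \<phi> (var j) l))"
    using psi_high by (simp add: laurent_mono_scale)
  also have "\<dots> = L_bar (\<phi> (L e))"
    by (simp add: phi_laurent_mono[abs_def] laurent_mono_sum)
  finally show ?thesis .
qed

definition x_bar :: "rfun \<Rightarrow> rfun" where
  "x_bar f = \<psi> f / L_bar (\<phi> f)"

lemma psi_eq_x_bar: "\<psi> f = x_bar f * L_bar (\<phi> f)"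
  by (simp add: x_bar_def laurent_mono_nonzero)

lemma x_bar_var: "i \<in> {1..n} \<Longrightarrow> x_bar (var i) = var i"
  using psi_low by (simp add: x_bar_def laurent_mono_nonzero)

lemma x_bar_1: "x_bar 1 = 1"
  by (simp add: x_bar_def psi_1 phi_1 laurent_mono_0)

lemma x_bar_mult:
  assumes "f \<in> sf m" "g \<in> sf m"
  shows "x_bar (f * g) = x_bar f * x_bar g"
proof -
  have "\<phi> (f * g) = (\<lambda>l. \<phi> f l + \<phi> g l)"
    using assms by (simp add: phi_mult fun_eq_iff)
  then show ?thesis
    using assms by (simp add: x_bar_def psi_mult laurent_mono_add)
qed

lemma x_bar_divide:
  assumes "f \<in> sf m" "g \<in> sf m" "g \<noteq> 0"
  shows "x_bar (f / g) = x_bar f / x_bar g"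
proof -
  have "x_bar f = x_bar (f / g) * x_bar g"
    using assms x_bar_mult[of "f / g" g] by (simp add: sf.sf_div)
  moreover have "x_bar g \<noteq> 0"
    using assms psi_inverse(2) by (simp add: x_bar_def laurent_mono_nonzero)
  ultimately show ?thesis
    by simp
qed

lemma x_bar_power: "f \<in> sf m \<Longrightarrow> x_bar (f ^ e) = x_bar f ^ e"
  by (induction e) (simp_all add: x_bar_1 x_bar_mult sf_closed)

lemma x_bar_prod: "(\<And>i. i \<in> S \<Longrightarrow> f i \<in> sf m) \<Longrightarrow> x_bar (\<Prod>i\<in>S. f i) = (\<Prod>i\<in>S. x_bar (f i))"
  by (induction S rule: infinite_finite_induct) (simp_all add: x_bar_1 x_bar_mult sf_closed)

lemma x_bar_prod_power:
  "(\<And>i. i \<in> S \<Longrightarrow> f i \<in> sf m) \<Longrightarrow> x_bar (\<Prod>i\<in>S. f i ^ d i) = (\<Prod>i\<in>S. x_bar (f i) ^ d i)"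
  by (simp add: x_bar_prod x_bar_power sf_closed)

lemma x_bar_laurent_mono: "x_bar (L e) = 1"
  by (simp add: x_bar_def psi_laurent_mono laurent_mono_nonzero)

lemma x_bar_add:
  assumes "f \<in> sf m" "g \<in> sf m"
  defines "d \<equiv> \<lambda>l. \<phi> f l - \<phi> g l"
  shows "x_bar (f + g) = (L_bar d * x_bar f + x_bar g) / L_bar (trop_add d (\<lambda>_. 0))"
proof -
  have "trop_add d (\<lambda>_. 0) = (\<lambda>l. \<phi> (f + g) l - \<phi> g l)"
    using assms by (auto simp: trop_add_def d_def phi_add min_def)
  then have "L_bar (trop_add d (\<lambda>_. 0)) = L_bar (\<phi> (f + g)) / L_bar (\<phi> g)"
    by (simp add: laurent_mono_diff)
  moreover have "L_bar d = L_bar (\<phi> f) / L_bar (\<phi> g)"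
    by (simp add: d_def laurent_mono_diff)
  moreover have "\<psi> (f + g) = x_bar f * L_bar (\<phi> f) + x_bar g * L_bar (\<phi> g)"
    using assms by (simp add: psi_add psi_eq_x_bar[symmetric])
  ultimately show ?thesis
    by (simp add: x_bar_def laurent_mono_nonzero field_simps)
qed

end

section \<open>The specialized seed pattern\<close>

lemma skew_symmetrizable_diag:
  assumes "skew_symmetrizable n B" "k \<in> {1..n}"
  shows "B k k = 0"
proof -
  obtain d :: "nat \<Rightarrow> int" where "d k > 0" "d k * B k k = - (d k * B k k)"
    using assms unfolding skew_symmetrizable_def by blast
  then show ?thesis
    by simp
qed

lemma tree_induct [consumes 1, case_names root edge]:
  assumes "t \<in> tree n" and "P []"
    and "\<And>t k. tree_edge n t k (t @ [k]) \<Longrightarrow> P t \<Longrightarrow> P (t @ [k])"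
  shows "P t"
  using assms(1)
proof (induction t rule: rev_induct)
  case (snoc k t)
  then have "tree_edge n t k (t @ [k])"
    by (auto simp: tree_edge_def tree_def successively_append_iff)
  then show ?case
    using assms(3) snoc.IH by (simp add: tree_edge_def)
qed (use assms(2) in simp)

locale specialized_pattern = coefficient_specialization +
  fixes x :: "nat list \<Rightarrow> nat \<Rightarrow> rfun" and y :: "nat list \<Rightarrow> nat \<Rightarrow> trop"
    and B :: "nat list \<Rightarrow> nat \<Rightarrow> nat \<Rightarrow> int"
  assumes pattern: "seed_pattern n m x y B"
    and initial: "\<forall>i \<in> {1..n}. x [] i = var i"
begin

lemma seed_facts:
  assumes "t \<in> tree n"
  shows "alg_indep {1..m} (full_cluster n (x t))" "skew_symmetrizable n (B t)"
  using assms pattern unfolding seed_pattern_def full_cluster_def[abs_def] by blast+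

lemma edge_facts:
  assumes "tree_edge n t k t'"
  shows "k \<in> {1..n}" "t \<in> tree n" "t' \<in> tree n"
    "matrix_mutation_rel n k (B t) (B t')" "y_mutation_rel n k (B t) (y t) (y t')"
    "x_mutation_rel n m k (B t) (y t) (x t) (x t')"
  using assms pattern unfolding seed_pattern_def tree_edge_def by blast+

lemma cluster_nonzero: "t \<in> tree n \<Longrightarrow> i \<in> {1..n} \<Longrightarrow> x t i \<noteq> 0"
  using alg_indep_nonzero[OF seed_facts(1), of t i] n_le_m by (simp add: full_cluster_def)

lemma B_diag: "t \<in> tree n \<Longrightarrow> k \<in> {1..n} \<Longrightarrow> B t k k = 0"
  using seed_facts(2) by (rule skew_symmetrizable_diag)

lemma cluster_mutation_unchanged: "tree_edge n t k t' \<Longrightarrow> i \<in> {1..n} \<Longrightarrow> i \<noteq> k \<Longrightarrow> x t' i = x t i"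
  using edge_facts(6) by (simp add: x_mutation_rel_def)

definition exch_pos :: "nat list \<Rightarrow> nat \<Rightarrow> rfun" where
  "exch_pos t k = L (y t k) * (\<Prod>i\<in>{i\<in>{1..n}. 0 < B t i k}. x t i ^ nat (B t i k))"

definition exch_neg :: "nat list \<Rightarrow> nat \<Rightarrow> rfun" where
  "exch_neg t k = (\<Prod>i\<in>{i\<in>{1..n}. B t i k < 0}. x t i ^ nat (- B t i k))"

lemma exchange_relation:
  "tree_edge n t k t' \<Longrightarrow> x t k * x t' k * L (trop_add (y t k) (\<lambda>_. 0)) = exch_pos t k + exch_neg t k"
  using edge_facts(6) laurent_mono_nonzero
  by (simp add: x_mutation_rel_def exch_pos_def exch_neg_def field_simps)

lemma exch_sf:
  assumes "\<And>i. i \<in> {1..n} \<Longrightarrow> x t i \<in> sf m"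
  shows "exch_pos t k \<in> sf m" "exch_neg t k \<in> sf m"
  unfolding exch_pos_def exch_neg_def using assms by (auto intro!: sf_closed)

lemma cluster_sf: "t \<in> tree n \<Longrightarrow> i \<in> {1..n} \<Longrightarrow> x t i \<in> sf m"
proof (induction t arbitrary: i rule: tree_induct)
  case root
  then show ?case
    using initial n_le_m by (simp add: sf_var)
next
  case (edge t k)
  have "x t k \<noteq> 0" "k \<in> {1..n}"
    using cluster_nonzero edge_facts(1,2)[OF edge(1)] by auto
  then have "x (t @ [k]) k = (exch_pos t k + exch_neg t k) / L (trop_add (y t k) (\<lambda>_. 0)) / x t k"
    using exchange_relation[OF edge(1)] laurent_mono_nonzero by (simp add: field_simps)
  then show ?case
    using edge exch_sf[of t k] cluster_mutation_unchanged[OF edge(1)]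
    by (cases "i = k") (auto intro!: sf.sf_div sf_closed)
qed

lemma cluster_prod_power_sf: "t \<in> tree n \<Longrightarrow> S \<subseteq> {1..n} \<Longrightarrow> (\<Prod>i\<in>S. x t i ^ d i) \<in> sf m"
  by (intro sf_closed cluster_sf) auto

lemma cluster_prod_power_int_sf:
  "t \<in> tree n \<Longrightarrow> S \<subseteq> {1..n} \<Longrightarrow> (\<Prod>i\<in>S. x t i powi e i) \<in> sf m"
  by (intro sf_closed cluster_sf) auto

definition y_bar :: "nat list \<Rightarrow> nat \<Rightarrow> trop" where
  "y_bar t k = \<phi> (L (y t k) * (\<Prod>i \<in> {1..n}. x t i powi B t i k))"

lemma y_bar_eq:
  assumes "t \<in> tree n"
  shows "y_bar t k l = \<phi> (L (y t k)) l + (\<Sum>i\<in>{1..n}. B t i k * \<phi> (x t i) l)"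
proof -
  have "\<phi> (\<Prod>i \<in> {1..n}. x t i powi B t i k) l = (\<Sum>i\<in>{1..n}. \<phi> (x t i powi B t i k) l)"
    by (rule phi_prod) (simp add: assms cluster_sf sf_closed)
  then show ?thesis
    using assms phi_mult[OF sf_closed(6) cluster_prod_power_int_sf[OF assms]]
    by (simp add: y_bar_def phi_power_int cluster_sf cluster_nonzero)
qed

lemma phi_exch_pos:
  assumes "t \<in> tree n"
  shows "\<phi> (exch_pos t k) l = \<phi> (L (y t k)) l + (\<Sum>i\<in>{1..n}. max (B t i k) 0 * \<phi> (x t i) l)"
proof -
  have "\<phi> (\<Prod>i\<in>{i\<in>{1..n}. 0 < B t i k}. x t i ^ nat (B t i k)) l
      = (\<Sum>i\<in>{i\<in>{1..n}. 0 < B t i k}. \<phi> (x t i ^ nat (B t i k)) l)"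
    by (rule phi_prod) (simp add: assms cluster_sf sf_closed)
  then show ?thesis
    using assms sum_filter_pos[of "{1..n}" "\<lambda>i. B t i k" "\<lambda>i. \<phi> (x t i) l"]
      phi_mult[OF sf_closed(6) cluster_prod_power_sf[OF assms Collect_restrict]]
    by (simp add: exch_pos_def phi_power cluster_sf)
qed

lemma phi_exch_neg:
  assumes "t \<in> tree n"
  shows "\<phi> (exch_neg t k) l = (\<Sum>i\<in>{1..n}. max (- B t i k) 0 * \<phi> (x t i) l)"
proof -
  have "\<phi> (exch_neg t k) l = (\<Sum>i\<in>{i\<in>{1..n}. B t i k < 0}. \<phi> (x t i ^ nat (- B t i k)) l)"
    unfolding exch_neg_def by (rule phi_prod) (simp add: assms cluster_sf sf_closed)
  then show ?thesis
    using assms sum_filter_neg[of "{1..n}" "\<lambda>i. B t i k" "\<lambda>i. \<phi> (x t i) l"]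
    by (simp add: phi_power cluster_sf)
qed

lemma y_bar_eq_diff:
  assumes "t \<in> tree n"
  shows "y_bar t k l = \<phi> (exch_pos t k) l - \<phi> (exch_neg t k) l"
proof -
  have "(\<Sum>i\<in>{1..n}. B t i k * \<phi> (x t i) l)
      = (\<Sum>i\<in>{1..n}. max (B t i k) 0 * \<phi> (x t i) l - max (- B t i k) 0 * \<phi> (x t i) l)"
    by (rule sum.cong) (auto simp: max_def algebra_simps)
  then show ?thesis
    using assms by (simp add: y_bar_eq phi_exch_pos phi_exch_neg sum_subtractf)
qed

lemma phi_exchange:
  assumes "tree_edge n t k t'"
  shows "\<phi> (x t k) l + \<phi> (x t' k) l + \<phi> (L (trop_add (y t k) (\<lambda>_. 0))) l
    = min (\<phi> (exch_pos t k) l) (\<phi> (exch_neg t k) l)"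
  using arg_cong[OF exchange_relation[OF assms], of "\<lambda>f. \<phi> f l"] edge_facts(1-3)[OF assms]
    exch_sf[OF cluster_sf[of t]]
  by (simp add: phi_mult phi_add cluster_sf sf_closed)

lemma phi_laurent_mono_mutation:
  assumes "tree_edge n t k t'" "j \<in> {1..n}" "j \<noteq> k"
  shows "\<phi> (L (y t' j)) l = \<phi> (L (y t j)) l + max (B t k j) 0 * \<phi> (L (y t k)) l
    - B t k j * \<phi> (L (trop_add (y t k) (\<lambda>_. 0))) l"
  using edge_facts(5)[OF assms(1)] assms(2,3)
  by (simp add: y_mutation_rel_def phi_laurent_mono trop_add_def algebra_simps sum.distrib
      sum_subtractf sum_distrib_left)

lemma y_bar_mutation_self:
  assumes e: "tree_edge n t k t'"
  shows "y_bar t' k l = - y_bar t k l"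
proof -
  note k = edge_facts(1)[OF e] and t = edge_facts(2)[OF e] and t' = edge_facts(3)[OF e]
  have "(\<Sum>i\<in>{1..n}. B t' i k * \<phi> (x t' i) l) = - (\<Sum>i\<in>{1..n}. B t i k * \<phi> (x t i) l)"
    by (intro sum_mutated_column_self[OF edge_facts(4)[OF e] k B_diag[OF t k]])
      (simp add: cluster_mutation_unchanged[OF e])
  moreover have "\<phi> (L (y t' k)) l = - \<phi> (L (y t k)) l"
    using edge_facts(5)[OF e] by (simp add: y_mutation_rel_def phi_laurent_mono sum_negf)
  ultimately show ?thesis
    by (simp add: y_bar_eq[OF t] y_bar_eq[OF t'])
qed

lemma y_bar_mutation_other:
  assumes e: "tree_edge n t k t'" and j: "j \<in> {1..n}" "j \<noteq> k"
  shows "y_bar t' j l = y_bar t j l + max (B t k j) 0 * y_bar t k l - B t k j * min (y_bar t k l) 0"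
proof -
  note k = edge_facts(1)[OF e] and t = edge_facts(2)[OF e] and t' = edge_facts(3)[OF e]
  define b where "b = B t k j"
  define S where "S = (\<Sum>i\<in>{1..n}. B t i k * \<phi> (x t i) l)"
  define N where "N = \<phi> (exch_neg t k) l"
  define T where "T = \<phi> (L (trop_add (y t k) (\<lambda>_. 0))) l"
  have y_bar_k: "y_bar t k l = \<phi> (L (y t k)) l + S"
    by (simp add: y_bar_eq[OF t] S_def)
  then have "\<phi> (exch_pos t k) l = \<phi> (L (y t k)) l + S + N"
    using y_bar_eq_diff[OF t, of k l] by (simp add: N_def)
  then have exchange: "\<phi> (x t k) l + \<phi> (x t' k) l = N + min (y_bar t k l) 0 - T"
    using phi_exchange[OF e, of l] y_bar_k by (auto simp: N_def T_def min_def)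
  have column: "(\<Sum>i\<in>{1..n}. B t' i j * \<phi> (x t' i) l) = (\<Sum>i\<in>{1..n}. B t i j * \<phi> (x t i) l)
      + max b 0 * S + b * N - b * (\<phi> (x t k) l + \<phi> (x t' k) l)"
    unfolding b_def S_def N_def phi_exch_neg[OF t]
    by (rule sum_mutated_column[OF edge_facts(4)[OF e] k j B_diag[OF t k]])
      (simp add: cluster_mutation_unchanged[OF e])
  have "y_bar t' j l = \<phi> (L (y t' j)) l + (\<Sum>i\<in>{1..n}. B t' i j * \<phi> (x t' i) l)"
    by (rule y_bar_eq[OF t'])
  also have "\<dots> = \<phi> (L (y t j)) l + max b 0 * \<phi> (L (y t k)) l - b * T
      + ((\<Sum>i\<in>{1..n}. B t i j * \<phi> (x t i) l) + max b 0 * S + b * N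
        - b * (\<phi> (x t k) l + \<phi> (x t' k) l))"
    using phi_laurent_mono_mutation[OF e j, of l] column by (simp add: b_def T_def)
  also have "\<dots> = y_bar t j l + max b 0 * y_bar t k l - b * min (y_bar t k l) 0"
    unfolding exchange y_bar_eq[OF t, of j l] y_bar_k by (simp add: algebra_simps)
  finally show ?thesis
    by (simp add: b_def)
qed

lemma y_bar_mutation: "tree_edge n t k t' \<Longrightarrow> y_mutation_rel n k (B t) (y_bar t) (y_bar t')"
  unfolding y_mutation_rel_def by (simp add: fun_eq_iff y_bar_mutation_self y_bar_mutation_other)

lemma x_bar_mutation:
  assumes e: "tree_edge n t k t'"
  shows "x_mutation_rel n mbar k (B t) (y_bar t) (\<lambda>i. x_bar (x t i)) (\<lambda>i. x_bar (x t' i))"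
proof -
  note k = edge_facts(1)[OF e] and t = edge_facts(2)[OF e] and t' = edge_facts(3)[OF e]
  let ?pos = "{i\<in>{1..n}. 0 < B t i k}" and ?neg = "{i\<in>{1..n}. B t i k < 0}"
  have sf: "x t k \<in> sf m" "x t' k \<in> sf m" "exch_pos t k \<in> sf m" "exch_neg t k \<in> sf m"
    using k cluster_sf[OF t] cluster_sf[OF t'] exch_sf[OF cluster_sf[OF t]] by auto
  have "x t k * x t' k = (exch_pos t k + exch_neg t k) / L (trop_add (y t k) (\<lambda>_. 0))"
    using exchange_relation[OF e] laurent_mono_nonzero by (simp add: eq_divide_eq)
  then have "x_bar (x t k) * x_bar (x t' k) = x_bar (exch_pos t k + exch_neg t k)"
    using sf by (simp add: x_bar_divide laurent_mono_nonzero x_bar_laurent_mono sf_closed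
        flip: x_bar_mult)
  also have "\<dots> = (L_bar (y_bar t k) * x_bar (exch_pos t k) + x_bar (exch_neg t k))
      / L_bar (trop_add (y_bar t k) (\<lambda>_. 0))"
  proof -
    have "y_bar t k = (\<lambda>l. \<phi> (exch_pos t k) l - \<phi> (exch_neg t k) l)"
      using y_bar_eq_diff[OF t] by (simp add: fun_eq_iff)
    then show ?thesis
      using sf by (simp add: x_bar_add)
  qed
  also have "x_bar (exch_pos t k) = (\<Prod>i\<in>?pos. x_bar (x t i) ^ nat (B t i k))"
  proof -
    have "x_bar (exch_pos t k) = x_bar (\<Prod>i\<in>?pos. x t i ^ nat (B t i k))"
      using cluster_prod_power_sf[OF t Collect_restrict]
      by (simp add: exch_pos_def x_bar_mult x_bar_laurent_mono sf_closed)
    also have "\<dots> = (\<Prod>i\<in>?pos. x_bar (x t i) ^ nat (B t i k))"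
      by (rule x_bar_prod_power) (simp add: cluster_sf[OF t])
    finally show ?thesis .
  qed
  also have "x_bar (exch_neg t k) = (\<Prod>i\<in>?neg. x_bar (x t i) ^ nat (- B t i k))"
    unfolding exch_neg_def by (rule x_bar_prod_power) (simp add: cluster_sf[OF t])
  finally show ?thesis
    using cluster_mutation_unchanged[OF e] by (simp add: x_mutation_rel_def)
qed

lemma x_bar_free_generators:
  assumes "t \<in> tree n"
  shows "alg_indep {1..mbar} (full_cluster n (\<lambda>i. x_bar (x t i))) \<and>
    gen_field {1..mbar} (full_cluster n (\<lambda>i. x_bar (x t i))) = ratfield mbar"
  using assms
proof (induction t rule: tree_induct)
  case root
  have "full_cluster n (\<lambda>i. x_bar (x [] i)) i = var i" if "i \<in> {1..mbar}" for i
    using initial that by (simp add: full_cluster_def x_bar_var)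
  then show ?case
    unfolding ratfield_def by (metis alg_indep_cong alg_indep_var gen_field_cong)
next
  case (edge t k)
  then show ?case
    using x_mutation_rel_free_generators[OF x_bar_mutation[OF edge(1)] _ n_le_mbar]
      edge_facts(1,2)[OF edge(1)] B_diag by simp
qed

lemma seed_pattern_x_bar: "seed_pattern n mbar (\<lambda>t i. x_bar (x t i)) y_bar B"
  unfolding seed_pattern_def
proof (intro conjI allI impI ballI)
  fix t assume t: "t \<in> tree n"
  note free = x_bar_free_generators[OF t, unfolded full_cluster_def[abs_def]]
  then show "alg_indep {1..mbar} (\<lambda>i. if i \<le> n then x_bar (x t i) else var i)"
    and "gen_field {1..mbar} (\<lambda>i. if i \<le> n then x_bar (x t i) else var i) = ratfield mbar"
    by simp_all
  show "skew_symmetrizable n (B t)"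
    using seed_facts(2)[OF t] .
  fix i assume "i \<in> {1..n}"
  then show "x_bar (x t i) \<in> ratfield mbar"
    using free n_le_mbar gen_field_generator[of i "{1..mbar}" "\<lambda>i. if i \<le> n then x_bar (x t i) else var i"]
    by simp
  show "y_bar t i \<in> trop_set n mbar"
    using hom_phi sf.sf_mult[OF sf_closed(6)[of n "y t i"]
        cluster_prod_power_int_sf[OF t subset_refl, of "\<lambda>j. B t j i"]]
    unfolding sf_hom_trop_def y_bar_def by blast
next
  fix t k t' assume e: "tree_edge n t k t'"
  show "matrix_mutation_rel n k (B t) (B t')"
    by (rule edge_facts(4)[OF e])
  show "y_mutation_rel n k (B t) (y_bar t) (y_bar t')"
    by (rule y_bar_mutation[OF e])
  show "x_mutation_rel n mbar k (B t) (y_bar t) (\<lambda>i. x_bar (x t i)) (\<lambda>i. x_bar (x t' i))"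
    by (rule x_bar_mutation[OF e])
qed

end

theorem theorem4p3p4:
  fixes n m mbar :: nat
    and \<phi> :: "rfun \<Rightarrow> trop" and \<psi> :: "rfun \<Rightarrow> rfun"
    and x :: "nat list \<Rightarrow> nat \<Rightarrow> rfun" and y :: "nat list \<Rightarrow> nat \<Rightarrow> trop"
    and B :: "nat list \<Rightarrow> nat \<Rightarrow> nat \<Rightarrow> int"
  assumes "0 < n" and "n \<le> m" and "n \<le> mbar"
    and hom_phi: "sf_hom_trop m n mbar \<phi>"
    and hom_psi: "sf_hom m mbar \<psi>"
    and psi_low: "\<forall>i \<in> {1..n}. \<psi> (var i) = var i * laurent_mono n mbar (\<phi> (var i))"
    and psi_high: "\<forall>i \<in> {n+1..m}. \<psi> (var i) = laurent_mono n mbar (\<phi> (var i))"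
    and pattern: "seed_pattern n m x y B"
    and initial: "\<forall>i \<in> {1..n}. x [] i = var i"
  shows "seed_pattern n mbar
           (\<lambda>t i. \<psi> (x t i) / laurent_mono n mbar (\<phi> (x t i)))
           (\<lambda>t k. \<phi> (laurent_mono n m (y t k) * (\<Prod>i \<in> {1..n}. x t i powi B t i k)))
           B"
proof -
  interpret specialized_pattern n m mbar \<phi> \<psi> x y B
    by unfold_locales (fact assms)+
  show ?thesis
    using seed_pattern_x_bar unfolding x_bar_def[abs_def] y_bar_def[abs_def] .
qed

end
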